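(* Consider a source, a destination and $M \geq 1$ relays. Let $a_{sd}$, $a_{si}$, $a_{id}$ ($i=1,\dots,M$) be mutually independent circularly symmetric complex Gaussian $\mathcal{CN}(0,1)$ channel gains (source to destination, source to relay $i$, relay $i$ to destination). Let the best relay $b$ be the index maximizing $\min\{|a_{si}|^2,|a_{id}|^2\}$, with gains $a_{sb}, a_{bd}$. Let $\rho>0$ be the SNR, $r\in(0,1/2)$ the multiplexing gain and $R = r\log\rho$ the code rate. Under opportunistic amplify-and-forward, the mutual information between source and destination is $$I = \tfrac12\log\bigl(1+\rho|a_{sd}|^2 + f(\rho|a_{sb}|^2, \rho|a_{bd}|^2)\bigr),\qquad f(x,y) = \frac{xy}{x+y+1},$$ and the outage probability is $P_e(\rho) = \Pr(I \leq R)$. Then opportunistic amplify-and-forward achieves the diversity-multiplexing tradeoff $d(r) = (M+1)(1-2r)$ for $r\in(0,1/2)$, where $d(r) = -\lim_{\rho\to\infty}\frac{\log P_e(\rho)}{\log\rho}$.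
   Context: Setting: the source transmits in the first half of the time slots; only the best relay (selected by the rule: largest $\min\{|a_{si}|^2,|a_{id}|^2\}$) amplifies and retransmits its received signal in the second half (orthogonal slots, half duplex); the destination combines the direct and relayed copies with a matched filter, with an i.i.d. Gaussian codebook. No channel knowledge is used at the physical layer. *)

theory Defs
  imports "HOL-Probability.Probability"
begin

definition cn_density :: "complex \<Rightarrow> ennreal" where
  "cn_density z = ennreal (exp (- ((cmod z)^2)) / pi)"

definition f_af :: "real \<Rightarrow> real \<Rightarrow> real" where
  "f_af x y = x * y / (x + y + 1)"

text \<open>Best relay: smallest index in {1..M} maximizing min(|a_si|^2, |a_id|^2)
  (ties occur with probability zero).\<close>
definition best_relay :: "nat \<Rightarrow> (nat \<Rightarrow> complex) \<Rightarrow> (nat \<Rightarrow> complex) \<Rightarrow> nat" where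
  "best_relay M asr ard = (LEAST i. i \<in> {1..M} \<and>
     (\<forall>j\<in>{1..M}. min ((cmod (asr j))^2) ((cmod (ard j))^2)
                  \<le> min ((cmod (asr i))^2) ((cmod (ard i))^2)))"

definition oaf_mutual_info ::
  "nat \<Rightarrow> real \<Rightarrow> complex \<Rightarrow> (nat \<Rightarrow> complex) \<Rightarrow> (nat \<Rightarrow> complex) \<Rightarrow> real" where
  "oaf_mutual_info M \<rho> asd asr ard =
     (let b = best_relay M asr ard in
      1/2 * ln (1 + \<rho> * (cmod asd)^2 + f_af (\<rho> * (cmod (asr b))^2) (\<rho> * (cmod (ard b))^2)))"

definition outage_prob ::
  "'a measure \<Rightarrow> nat \<Rightarrow> real \<Rightarrow> real \<Rightarrow> ('a \<Rightarrow> complex) \<Rightarrow> (nat \<Rightarrow> 'a \<Rightarrow> complex)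
   \<Rightarrow> (nat \<Rightarrow> 'a \<Rightarrow> complex) \<Rightarrow> real" where
  "outage_prob P M \<rho> r asd asr ard =
     measure P {\<omega> \<in> space P. oaf_mutual_info M \<rho> (asd \<omega>) (\<lambda>i. asr i \<omega>) (\<lambda>i. ard i \<omega>) \<le> r * ln \<rho>}"

datatype link = SD | SR nat | RD nat

definition link_gain :: "('a \<Rightarrow> complex) \<Rightarrow> (nat \<Rightarrow> 'a \<Rightarrow> complex) \<Rightarrow> (nat \<Rightarrow> 'a \<Rightarrow> complex)
   \<Rightarrow> link \<Rightarrow> 'a \<Rightarrow> complex" where
  "link_gain asd asr ard l = (case l of SD \<Rightarrow> asd | SR i \<Rightarrow> asr i | RD i \<Rightarrow> ard i)"

end

theory Submission
  imports Defs "HOL-Real_Asymp.Real_Asymp"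
begin

text \<open>Write \<open>s = \<rho> powr (2r - 1)\<close>, so that outage means
  \<open>1 + \<rho> |a_sd|\<^sup>2 + f(\<rho> |a_sb|\<^sup>2, \<rho> |a_bd|\<^sup>2) \<le> \<rho> s\<close>.
  Since \<open>f(x, y) \<le> x\<close>, outage occurs as soon as \<open>|a_sd|\<^sup>2\<close> and all \<open>|a_si|\<^sup>2\<close> are below \<open>s/3\<close>.
  Conversely, \<open>f(x, y) \<le> T\<close> with \<open>T \<ge> 1\<close> forces \<open>min x y \<le> 3T\<close>, so in outage
  \<open>|a_sd|\<^sup>2 \<le> 3s\<close> and, the relay being the best one, \<open>min(|a_si|\<^sup>2, |a_id|\<^sup>2) \<le> 3s\<close> for every relay;
  choosing for each relay the smaller of its two gains covers this event by \<open>2\<^sup>M\<close> intersections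
  of \<open>M + 1\<close> independent events.  The squared modulus of a \<open>CN(0,1)\<close> gain is at most \<open>t\<close> with
  probability between \<open>t e\<^sup>-\<^sup>t\<close> and \<open>t\<close>, so \<open>P_e(\<rho>)\<close> is squeezed between two constant multiples of
  \<open>s\<^sup>M\<^sup>+\<^sup>1 = \<rho> powr ((M + 1)(2r - 1))\<close>.\<close>

lemma f_af_nonneg: "0 \<le> x \<Longrightarrow> 0 \<le> y \<Longrightarrow> 0 \<le> f_af x y"
  unfolding f_af_def by simp

lemma f_af_le_left: "0 \<le> x \<Longrightarrow> 0 \<le> y \<Longrightarrow> f_af x y \<le> x"
  unfolding f_af_def by (simp add: divide_le_eq mult_left_mono)

lemma f_af_commute: "f_af x y = f_af y x"
  unfolding f_af_def by (simp add: algebra_simps)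

lemma min_le_of_f_af_le:
  assumes "0 \<le> x" "0 \<le> y" "1 \<le> T" "f_af x y \<le> T"
  shows "min x y \<le> 3 * T"
proof -
  have smaller_le: "x \<le> 3 * T" if "0 \<le> x" "x \<le> y" "f_af x y \<le> T" for x y
  proof (cases "y < 1")
    case True
    then show ?thesis using that \<open>1 \<le> T\<close> by linarith
  next
    case False
    have "x * y \<le> T * (x + y + 1)"
      using that False by (simp add: f_af_def divide_le_eq)
    also have "\<dots> \<le> T * (3 * y)"
      using that False \<open>1 \<le> T\<close> by (intro mult_left_mono) auto
    finally have "y * x \<le> y * (3 * T)" by (simp add: algebra_simps)
    then show ?thesis using False by (simp add: mult_le_cancel_left)
  qed
  show ?thesis
    using smaller_le[of x y] smaller_le[of y x] assms f_af_commute[of x y]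
    by (cases "x \<le> y") auto
qed

lemma best_relay_spec:
  assumes "1 \<le> M"
  shows "best_relay M a d \<in> {1..M} \<and>
    (\<forall>j\<in>{1..M}. min ((cmod (a j))\<^sup>2) ((cmod (d j))\<^sup>2)
       \<le> min ((cmod (a (best_relay M a d)))\<^sup>2) ((cmod (d (best_relay M a d)))\<^sup>2))"
proof -
  define U where "U i = min ((cmod (a i))\<^sup>2) ((cmod (d i))\<^sup>2)" for i
  have fin: "finite (U ` {1..M})" "U ` {1..M} \<noteq> {}" using assms by auto
  obtain i where "i \<in> {1..M}" "U i = Max (U ` {1..M})"
    using Max_in[OF fin] by auto
  with fin have "\<exists>i. i \<in> {1..M} \<and> (\<forall>j\<in>{1..M}. U j \<le> U i)"
    by (intro exI[of _ i]) auto
  then show ?thesis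
    unfolding best_relay_def U_def by (rule LeastI_ex)
qed

lemma best_relay_in: "1 \<le> M \<Longrightarrow> best_relay M a d \<in> {1..M}"
  using best_relay_spec by (rule conjunct1)

lemma best_relay_max:
  "1 \<le> M \<Longrightarrow> j \<in> {1..M} \<Longrightarrow> min ((cmod (a j))\<^sup>2) ((cmod (d j))\<^sup>2)
     \<le> min ((cmod (a (best_relay M a d)))\<^sup>2) ((cmod (d (best_relay M a d)))\<^sup>2)"
  using best_relay_spec[THEN conjunct2] by (rule bspec)

lemma best_relay_cong:
  assumes "\<And>i. i \<in> {1..M} \<Longrightarrow> a i = a' i \<and> d i = d' i"
  shows "best_relay M a d = best_relay M a' d'"
  unfolding best_relay_def using assms by (intro arg_cong[where f = Least] ext) auto

lemma oaf_mutual_info_cong: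
  assumes "1 \<le> M" "\<And>i. i \<in> {1..M} \<Longrightarrow> a i = a' i \<and> d i = d' i"
  shows "oaf_mutual_info M \<rho> x a d = oaf_mutual_info M \<rho> x a' d'"
proof -
  have "best_relay M a d \<in> {1..M}" using assms(1) by (rule best_relay_in)
  then have "a (best_relay M a d) = a' (best_relay M a' d')" "d (best_relay M a d) = d' (best_relay M a' d')"
    using assms(2) best_relay_cong[OF assms(2)] by auto
  then show ?thesis by (simp add: oaf_mutual_info_def Let_def)
qed

lemma oaf_outage_iff:
  assumes "0 < \<rho>"
  shows "oaf_mutual_info M \<rho> x a d \<le> r * ln \<rho> \<longleftrightarrow>
    1 + \<rho> * (cmod x)\<^sup>2 + f_af (\<rho> * (cmod (a (best_relay M a d)))\<^sup>2) (\<rho> * (cmod (d (best_relay M a d)))\<^sup>2)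
      \<le> \<rho> powr (2 * r)"
proof -
  let ?snr = "1 + \<rho> * (cmod x)\<^sup>2 + f_af (\<rho> * (cmod (a (best_relay M a d)))\<^sup>2) (\<rho> * (cmod (d (best_relay M a d)))\<^sup>2)"
  have "0 \<le> f_af (\<rho> * (cmod (a (best_relay M a d)))\<^sup>2) (\<rho> * (cmod (d (best_relay M a d)))\<^sup>2)"
    using assms by (intro f_af_nonneg) auto
  then have "0 < ?snr" using assms by (simp add: add_pos_nonneg)
  have "oaf_mutual_info M \<rho> x a d = ln ?snr / 2"
    by (simp add: oaf_mutual_info_def Let_def)
  moreover have "ln (\<rho> powr (2 * r)) = 2 * (r * ln \<rho>)"
    using assms by (simp add: ln_powr)
  ultimately have "oaf_mutual_info M \<rho> x a d \<le> r * ln \<rho> \<longleftrightarrow> ln ?snr \<le> ln (\<rho> powr (2 * r))"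
    by linarith
  also have "\<dots> \<longleftrightarrow> ?snr \<le> \<rho> powr (2 * r)"
    using \<open>0 < ?snr\<close> assms by (intro ln_le_cancel_iff) auto
  finally show ?thesis .
qed

lemma outage_if_gains_small:
  assumes "1 \<le> M" "0 < \<rho>" "3 \<le> \<rho> powr (2 * r)"
    and "(cmod x)\<^sup>2 \<le> \<rho> powr (2 * r - 1) / 3"
    and "\<And>i. i \<in> {1..M} \<Longrightarrow> (cmod (a i))\<^sup>2 \<le> \<rho> powr (2 * r - 1) / 3"
  shows "oaf_mutual_info M \<rho> x a d \<le> r * ln \<rho>"
proof -
  define b where "b = best_relay M a d"
  define s where "s = \<rho> powr (2 * r - 1)"
  have rho_s: "\<rho> * (s / 3) = \<rho> powr (2 * r) / 3"
    using assms(2) by (simp add: s_def powr_mult_base)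
  have "\<rho> * (cmod x)\<^sup>2 \<le> \<rho> * (s / 3)"
    using assms(2,4) by (simp add: s_def)
  moreover have "f_af (\<rho> * (cmod (a b))\<^sup>2) (\<rho> * (cmod (d b))\<^sup>2) \<le> \<rho> * (s / 3)"
  proof -
    have "f_af (\<rho> * (cmod (a b))\<^sup>2) (\<rho> * (cmod (d b))\<^sup>2) \<le> \<rho> * (cmod (a b))\<^sup>2"
      using assms(2) by (intro f_af_le_left) auto
    also have "\<dots> \<le> \<rho> * (s / 3)"
      using assms(2,5) best_relay_in[OF assms(1)] by (simp add: b_def s_def)
    finally show ?thesis .
  qed
  ultimately show ?thesis
    using assms(3) oaf_outage_iff[OF assms(2)] rho_s unfolding b_def by simp
qed

lemma gains_small_if_outage:
  assumes "1 \<le> M" "0 < \<rho>" "1 \<le> \<rho> powr (2 * r)"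
    and "oaf_mutual_info M \<rho> x a d \<le> r * ln \<rho>"
  shows "(cmod x)\<^sup>2 \<le> \<rho> powr (2 * r - 1)"
    and "\<And>i. i \<in> {1..M} \<Longrightarrow> min ((cmod (a i))\<^sup>2) ((cmod (d i))\<^sup>2) \<le> 3 * \<rho> powr (2 * r - 1)"
proof -
  define b where "b = best_relay M a d"
  define T where "T = \<rho> powr (2 * r)"
  have rho_s: "\<rho> * \<rho> powr (2 * r - 1) = T"
    using assms(2) by (simp add: T_def powr_mult_base)
  have snr: "1 + \<rho> * (cmod x)\<^sup>2 + f_af (\<rho> * (cmod (a b))\<^sup>2) (\<rho> * (cmod (d b))\<^sup>2) \<le> T"
    using assms(4) oaf_outage_iff[OF assms(2)] unfolding b_def T_def by simp
  have f_nonneg: "0 \<le> f_af (\<rho> * (cmod (a b))\<^sup>2) (\<rho> * (cmod (d b))\<^sup>2)"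
    using assms(2) by (intro f_af_nonneg) auto
  have "\<rho> * (cmod x)\<^sup>2 \<le> \<rho> * \<rho> powr (2 * r - 1)"
    using snr f_nonneg rho_s by linarith
  then show "(cmod x)\<^sup>2 \<le> \<rho> powr (2 * r - 1)"
    using assms(2) by simp
  have "0 \<le> \<rho> * (cmod x)\<^sup>2" using assms(2) by simp
  then have "f_af (\<rho> * (cmod (a b))\<^sup>2) (\<rho> * (cmod (d b))\<^sup>2) \<le> T"
    using snr by linarith
  then have "min (\<rho> * (cmod (a b))\<^sup>2) (\<rho> * (cmod (d b))\<^sup>2) \<le> 3 * T"
    using assms(2,3) by (intro min_le_of_f_af_le) (auto simp: T_def)
  then have "\<rho> * min ((cmod (a b))\<^sup>2) ((cmod (d b))\<^sup>2) \<le> \<rho> * (3 * \<rho> powr (2 * r - 1))"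
    using assms(2) rho_s by (simp add: min_mult_distrib_left)
  then have best: "min ((cmod (a b))\<^sup>2) ((cmod (d b))\<^sup>2) \<le> 3 * \<rho> powr (2 * r - 1)"
    using assms(2) by simp
  show "min ((cmod (a i))\<^sup>2) ((cmod (d i))\<^sup>2) \<le> 3 * \<rho> powr (2 * r - 1)" if "i \<in> {1..M}" for i
    using best_relay_max[OF assms(1) that, of a d] best unfolding b_def by linarith
qed

lemma (in prob_space) prob_cn_norm_sq_le_bounds:
  assumes X: "distributed M lborel X cn_density" and "0 \<le> t"
  shows "t * exp (- t) \<le> prob (X -` {z. (cmod z)\<^sup>2 \<le> t} \<inter> space M)"
    and "prob (X -` {z. (cmod z)\<^sup>2 \<le> t} \<inter> space M) \<le> t"
proof -
  define B where "B = cball (0::complex) (sqrt t)"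
  have B_sets: "B \<in> sets lborel" unfolding B_def by simp
  have "cmod z \<le> sqrt t \<longleftrightarrow> (cmod z)\<^sup>2 \<le> t" for z
    using real_sqrt_le_iff[of "(cmod z)\<^sup>2" t] by simp
  then have B_eq: "{z. (cmod z)\<^sup>2 \<le> t} = B"
    unfolding B_def set_eq_iff mem_cball_0 mem_Collect_eq by blast
  have "emeasure M (X -` B \<inter> space M) = emeasure (distr M lborel X) B"
    by (rule emeasure_distr[OF distributed_measurable[OF X] B_sets, symmetric])
  also have "\<dots> = emeasure (density lborel cn_density) B"
    by (simp add: distributed_distr_eq_density[OF X])
  also have "\<dots> = (\<integral>\<^sup>+ z. cn_density z * indicator B z \<partial>lborel)"
    by (rule emeasure_density[OF distributed_borel_measurable[OF X] B_sets])
  finally have prob_eq: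
    "ennreal (prob (X -` {z. (cmod z)\<^sup>2 \<le> t} \<inter> space M)) = (\<integral>\<^sup>+ z. cn_density z * indicator B z \<partial>lborel)"
    unfolding B_eq by (simp add: emeasure_eq_measure)
  have area: "emeasure lborel B = ennreal (pi * t)"
    unfolding B_def using \<open>0 \<le> t\<close> by (simp add: emeasure_cball unit_ball_vol_2)
  txt \<open>On \<open>B\<close> the density lies between \<open>exp (- t) / pi\<close> and \<open>1 / pi\<close>.\<close>
  have "ennreal (prob (X -` {z. (cmod z)\<^sup>2 \<le> t} \<inter> space M))
      \<le> (\<integral>\<^sup>+ z. ennreal (1 / pi) * indicator B z \<partial>lborel)"
    unfolding prob_eq by (intro nn_integral_mono)
      (auto simp: cn_density_def indicator_def divide_right_mono intro!: ennreal_leI)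
  also have "\<dots> = ennreal (1 / pi) * emeasure lborel B"
    using B_sets by (simp add: nn_integral_cmult_indicator)
  also have "\<dots> = ennreal t"
    using area \<open>0 \<le> t\<close> by (simp add: ennreal_mult''[symmetric])
  finally show "prob (X -` {z. (cmod z)\<^sup>2 \<le> t} \<inter> space M) \<le> t"
    using \<open>0 \<le> t\<close> by (simp add: ennreal_le_iff)
  have "ennreal (t * exp (- t)) = ennreal (exp (- t) / pi) * emeasure lborel B"
    using area \<open>0 \<le> t\<close> by (simp add: ennreal_mult''[symmetric])
  also have "\<dots> = (\<integral>\<^sup>+ z. ennreal (exp (- t) / pi) * indicator B z \<partial>lborel)"
    using B_sets by (simp add: nn_integral_cmult_indicator)
  also have "\<dots> \<le> (\<integral>\<^sup>+ z. cn_density z * indicator B z \<partial>lborel)"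
    using B_eq by (intro nn_integral_mono)
      (auto simp: cn_density_def indicator_def intro!: ennreal_leI divide_right_mono)
  also have "\<dots> = ennreal (prob (X -` {z. (cmod z)\<^sup>2 \<le> t} \<inter> space M))"
    by (rule prob_eq[symmetric])
  finally show "t * exp (- t) \<le> prob (X -` {z. (cmod z)\<^sup>2 \<le> t} \<inter> space M)"
    by (simp add: ennreal_le_iff)
qed

definition relay_links :: "nat \<Rightarrow> link set" where
  "relay_links M = {SD} \<union> SR ` {1..M} \<union> RD ` {1..M}"

text \<open>One summand of the union bound for outage: \<open>K\<close> is the set of relays whose source link is the
  weak one.\<close>
definition link_choice :: "nat \<Rightarrow> nat set \<Rightarrow> link set" where
  "link_choice M K = insert SD (SR ` K \<union> RD ` ({1..M} - K))"

lemma link_choice_subset: "K \<subseteq> {1..M} \<Longrightarrow> link_choice M K \<subseteq> relay_links M"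
  unfolding link_choice_def relay_links_def by auto

lemma card_link_choice:
  assumes "K \<subseteq> {1..M}"
  shows "card (link_choice M K) = M + 1"
proof -
  have "finite K" using assms finite_subset by blast
  have "card (SR ` K \<union> RD ` ({1..M} - K)) = card K + card ({1..M} - K)"
    using \<open>finite K\<close> by (subst card_Un_disjoint) (auto simp: card_image inj_on_def)
  also have "\<dots> = M"
    using assms \<open>finite K\<close> card_mono[OF _ assms] by (simp add: card_Diff_subset)
  finally show ?thesis
    unfolding link_choice_def using \<open>finite K\<close> by (subst card_insert_disjoint) auto
qed

lemma tendsto_ln_div_ln_of_powr_bounds:
  fixes p :: "real \<Rightarrow> real"
  assumes "0 < c" "0 < C"
    and "\<forall>\<^sub>F x in at_top. c * x powr a \<le> p x \<and> p x \<le> C * x powr a"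
  shows "((\<lambda>x. ln (p x) / ln x) \<longlongrightarrow> a) at_top"
proof (rule tendsto_sandwich)
  have bounds: "a + ln c / ln x \<le> ln (p x) / ln x \<and> ln (p x) / ln x \<le> a + ln C / ln x"
    if "1 < x" "c * x powr a \<le> p x" "p x \<le> C * x powr a" for x
  proof -
    have "0 < c * x powr a" using that(1) assms(1) by simp
    then have "0 < p x" using that(2) by linarith
    have "ln (c * x powr a) \<le> ln (p x)" "ln (p x) \<le> ln (C * x powr a)"
      using ln_mono[OF that(2) \<open>0 < c * x powr a\<close>] ln_mono[OF that(3) \<open>0 < p x\<close>] .
    then have "ln c + a * ln x \<le> ln (p x)" "ln (p x) \<le> ln C + a * ln x"
      using that(1) assms(1,2) by (simp_all add: ln_mult ln_powr)
    moreover have "0 < ln x" using that(1) by simp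
    ultimately have "(ln c + a * ln x) / ln x \<le> ln (p x) / ln x" "ln (p x) / ln x \<le> (ln C + a * ln x) / ln x"
      by (simp_all add: divide_right_mono)
    moreover have "(k + a * ln x) / ln x = a + k / ln x" for k
      using \<open>0 < ln x\<close> by (simp add: field_simps)
    ultimately show ?thesis by simp
  qed
  show "\<forall>\<^sub>F x in at_top. a + ln c / ln x \<le> ln (p x) / ln x"
    and "\<forall>\<^sub>F x in at_top. ln (p x) / ln x \<le> a + ln C / ln x"
    using eventually_conj[OF eventually_gt_at_top[of 1] assms(3)] by (auto elim!: eventually_mono dest: bounds)
  show "((\<lambda>x. a + ln c / ln x) \<longlongrightarrow> a) at_top" "((\<lambda>x. a + ln C / ln x) \<longlongrightarrow> a) at_top"
    by real_asymp+
qed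

locale oaf_channel = prob_space P for P :: "'a measure" +
  fixes M :: nat and asd :: "'a \<Rightarrow> complex" and asr ard :: "nat \<Rightarrow> 'a \<Rightarrow> complex"
  assumes relays_nonempty: "1 \<le> M"
    and indep_links: "indep_vars (\<lambda>_. borel) (link_gain asd asr ard) (relay_links M)"
    and distributed_asd: "distributed P lborel asd cn_density"
    and distributed_asr: "\<forall>i\<in>{1..M}. distributed P lborel (asr i) cn_density"
    and distributed_ard: "\<forall>i\<in>{1..M}. distributed P lborel (ard i) cn_density"
begin

definition gain_le :: "link \<Rightarrow> real \<Rightarrow> 'a set" where
  "gain_le j t = link_gain asd asr ard j -` {z. (cmod z)\<^sup>2 \<le> t} \<inter> space P"

definition outage_event :: "real \<Rightarrow> real \<Rightarrow> 'a set" where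
  "outage_event \<rho> r =
     {\<omega> \<in> space P. oaf_mutual_info M \<rho> (asd \<omega>) (\<lambda>i. asr i \<omega>) (\<lambda>i. ard i \<omega>) \<le> r * ln \<rho>}"

lemma distributed_link_gain:
  "j \<in> relay_links M \<Longrightarrow> distributed P lborel (link_gain asd asr ard j) cn_density"
  using distributed_asd distributed_asr distributed_ard
  by (auto simp: relay_links_def link_gain_def)

lemma gain_le_in_events: "j \<in> relay_links M \<Longrightarrow> gain_le j t \<in> events"
  unfolding gain_le_def
  by (intro measurable_sets[OF distributed_measurable[OF distributed_link_gain]]) auto

lemma prob_Inter_gain_le_bounds:
  assumes "J \<subseteq> relay_links M" "J \<noteq> {}" "finite J" "0 \<le> t"
  shows "(t * exp (- t)) ^ card J \<le> prob (\<Inter>j\<in>J. gain_le j t)"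
    and "prob (\<Inter>j\<in>J. gain_le j t) \<le> t ^ card J"
proof -
  have prod: "prob (\<Inter>j\<in>J. gain_le j t) = (\<Prod>j\<in>J. prob (gain_le j t))"
    unfolding gain_le_def using assms by (intro indep_varsD[OF indep_links]) auto
  have bounds: "t * exp (- t) \<le> prob (gain_le j t)" "prob (gain_le j t) \<le> t" if "j \<in> J" for j
    using prob_cn_norm_sq_le_bounds[OF distributed_link_gain \<open>0 \<le> t\<close>, of j] that assms(1)
    unfolding gain_le_def by auto
  have "(t * exp (- t)) ^ card J = (\<Prod>j\<in>J. t * exp (- t))" by simp
  also have "\<dots> \<le> (\<Prod>j\<in>J. prob (gain_le j t))"
    using bounds \<open>0 \<le> t\<close> by (intro prod_mono) auto
  finally show "(t * exp (- t)) ^ card J \<le> prob (\<Inter>j\<in>J. gain_le j t)"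
    unfolding prod .
  have "(\<Prod>j\<in>J. prob (gain_le j t)) \<le> (\<Prod>j\<in>J. t)"
    using bounds by (intro prod_mono) auto
  then show "prob (\<Inter>j\<in>J. gain_le j t) \<le> t ^ card J"
    unfolding prod by simp
qed

lemma outage_prob_eq: "outage_prob P M \<rho> r asd asr ard = prob (outage_event \<rho> r)"
  by (simp add: outage_prob_def outage_event_def)

lemma outage_event_in_events: "outage_event \<rho> r \<in> events"
proof -
  txt \<open>Only the relays \<open>1..M\<close> are assumed measurable, so replace the others by \<open>0\<close>.\<close>
  define asr' where "asr' i = (if i \<in> {1..M} then asr i else (\<lambda>_. 0))" for i
  define ard' where "ard' i = (if i \<in> {1..M} then ard i else (\<lambda>_. 0))" for i
  have [measurable]: "asd \<in> borel_measurable P" "asr' i \<in> borel_measurable P" "ard' i \<in> borel_measurable P" for i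
    using distributed_asd distributed_asr distributed_ard unfolding asr'_def ard'_def
    by (auto dest!: distributed_measurable simp: measurable_lborel2)
  have "oaf_mutual_info M \<rho> (asd \<omega>) (\<lambda>i. asr i \<omega>) (\<lambda>i. ard i \<omega>)
      = oaf_mutual_info M \<rho> (asd \<omega>) (\<lambda>i. asr' i \<omega>) (\<lambda>i. ard' i \<omega>)" for \<omega>
    using relays_nonempty by (intro oaf_mutual_info_cong) (auto simp: asr'_def ard'_def)
  then show ?thesis
    unfolding outage_event_def oaf_mutual_info_def Let_def best_relay_def f_af_def
    by simp measurable
qed

lemma outage_prob_lower_bound:
  assumes "1 < \<rho>" "r < 1/2" "3 \<le> \<rho> powr (2 * r)"
  shows "\<rho> powr (real (M + 1) * (2 * r - 1)) / (3 * exp 1) ^ (M + 1) \<le> outage_prob P M \<rho> r asd asr ard"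
proof -
  define t where "t = \<rho> powr (2 * r - 1) / 3"
  have "0 < t" using assms(1) by (simp add: t_def)
  have "t \<le> 1"
    using powr_less_one[of \<rho> "2 * r - 1"] assms(1,2) by (simp add: t_def)
  have choice: "link_choice M {1..M} \<subseteq> relay_links M" "link_choice M {1..M} \<noteq> {}"
    "finite (link_choice M {1..M})" "card (link_choice M {1..M}) = M + 1"
    by (simp_all add: link_choice_subset card_link_choice) (simp_all add: link_choice_def)
  have small_gains: "(\<Inter>j\<in>link_choice M {1..M}. gain_le j t) \<subseteq> outage_event \<rho> r"
  proof
    fix \<omega> assume "\<omega> \<in> (\<Inter>j\<in>link_choice M {1..M}. gain_le j t)"
    then have "\<omega> \<in> space P" "(cmod (asd \<omega>))\<^sup>2 \<le> t" "\<And>i. i \<in> {1..M} \<Longrightarrow> (cmod (asr i \<omega>))\<^sup>2 \<le> t"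
      by (auto simp: link_choice_def gain_le_def link_gain_def)
    then show "\<omega> \<in> outage_event \<rho> r"
      using outage_if_gains_small[OF relays_nonempty _ assms(3)] assms(1)
      by (simp add: outage_event_def t_def)
  qed
  have base: "\<rho> powr (2 * r - 1) / (3 * exp 1) = t * exp (- 1)"
    by (simp add: t_def exp_minus field_simps)
  have "\<rho> powr (real (M + 1) * (2 * r - 1)) = (\<rho> powr (2 * r - 1)) ^ (M + 1)"
    using assms(1) by (subst powr_power) auto
  then have "\<rho> powr (real (M + 1) * (2 * r - 1)) / (3 * exp 1) ^ (M + 1) = (t * exp (- 1)) ^ (M + 1)"
    by (simp only: power_divide[symmetric] base)
  also have "\<dots> \<le> (t * exp (- t)) ^ (M + 1)"
    using \<open>0 < t\<close> \<open>t \<le> 1\<close> by (intro power_mono mult_left_mono) auto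
  also have "\<dots> \<le> prob (\<Inter>j\<in>link_choice M {1..M}. gain_le j t)"
    using prob_Inter_gain_le_bounds(1)[OF choice(1-3) less_imp_le[OF \<open>0 < t\<close>]]
    unfolding choice(4) .
  also have "\<dots> \<le> prob (outage_event \<rho> r)"
    using small_gains outage_event_in_events by (rule finite_measure_mono)
  finally show ?thesis by (simp add: outage_prob_eq)
qed

lemma outage_prob_upper_bound:
  assumes "1 < \<rho>" "0 \<le> r"
  shows "outage_prob P M \<rho> r asd asr ard \<le> 2 ^ M * 3 ^ (M + 1) * \<rho> powr (real (M + 1) * (2 * r - 1))"
proof -
  define t where "t = 3 * \<rho> powr (2 * r - 1)"
  have choice: "link_choice M K \<subseteq> relay_links M" "link_choice M K \<noteq> {}" "finite (link_choice M K)"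
    "card (link_choice M K) = M + 1" if "K \<in> Pow {1..M}" for K
    using that link_choice_subset[of K M] card_link_choice[of K M] finite_subset[of K "{1..M}"]
    by (auto simp: link_choice_def)
  have Inter_events: "(\<Inter>j\<in>link_choice M K. gain_le j t) \<in> events" if "K \<in> Pow {1..M}" for K
    using choice[OF that] gain_le_in_events by (intro sets.finite_INT) auto
  have cover: "outage_event \<rho> r \<subseteq> (\<Union>K\<in>Pow {1..M}. \<Inter>j\<in>link_choice M K. gain_le j t)"
  proof
    fix \<omega> assume "\<omega> \<in> outage_event \<rho> r"
    then have "\<omega> \<in> space P"
      and outage: "oaf_mutual_info M \<rho> (asd \<omega>) (\<lambda>i. asr i \<omega>) (\<lambda>i. ard i \<omega>) \<le> r * ln \<rho>"
      by (auto simp: outage_event_def)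
    have "0 < \<rho>" "1 \<le> \<rho> powr (2 * r)" using assms by (auto intro: ge_one_powr_ge_zero)
    note small = gains_small_if_outage[OF relays_nonempty this outage]
    define K where "K = {i \<in> {1..M}. (cmod (asr i \<omega>))\<^sup>2 \<le> t}"
    have "(cmod (asd \<omega>))\<^sup>2 \<le> t"
      using small(1) powr_ge_zero[of \<rho> "2 * r - 1"] unfolding t_def by linarith
    moreover have "(cmod (asr i \<omega>))\<^sup>2 \<le> t" if "i \<in> K" for i
      using that by (simp add: K_def)
    moreover have "(cmod (ard i \<omega>))\<^sup>2 \<le> t" if "i \<in> {1..M} - K" for i
      using small(2)[of i] that by (auto simp: K_def t_def)
    ultimately have "\<omega> \<in> (\<Inter>j\<in>link_choice M K. gain_le j t)"
      using \<open>\<omega> \<in> space P\<close> by (auto simp: link_choice_def gain_le_def link_gain_def)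
    moreover have "K \<in> Pow {1..M}" by (auto simp: K_def)
    ultimately show "\<omega> \<in> (\<Union>K\<in>Pow {1..M}. \<Inter>j\<in>link_choice M K. gain_le j t)" by blast
  qed
  have "prob (outage_event \<rho> r) \<le> prob (\<Union>K\<in>Pow {1..M}. \<Inter>j\<in>link_choice M K. gain_le j t)"
    using cover Inter_events by (intro finite_measure_mono) auto
  also have "\<dots> \<le> (\<Sum>K\<in>Pow {1..M}. prob (\<Inter>j\<in>link_choice M K. gain_le j t))"
    using Inter_events by (intro finite_measure_subadditive_finite) auto
  also have "\<dots> \<le> (\<Sum>K\<in>Pow {1..M}. t ^ (M + 1))"
  proof (rule sum_mono)
    fix K assume "K \<in> Pow {1..M}"
    have "0 \<le> t" by (simp add: t_def)
    from prob_Inter_gain_le_bounds(2)[OF choice(1-3)[OF \<open>K \<in> Pow {1..M}\<close>] this]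
    show "prob (\<Inter>j\<in>link_choice M K. gain_le j t) \<le> t ^ (M + 1)"
      unfolding choice(4)[OF \<open>K \<in> Pow {1..M}\<close>] .
  qed
  also have "\<dots> = 2 ^ M * t ^ (M + 1)"
    unfolding sum_constant by (simp add: card_Pow)
  also have "t ^ (M + 1) = 3 ^ (M + 1) * \<rho> powr (real (M + 1) * (2 * r - 1))"
    using assms(1) unfolding t_def power_mult_distrib by (subst powr_power) auto
  finally show ?thesis by (simp add: outage_prob_eq)
qed

end

theorem theorem4:
  fixes P :: "'a measure" and M :: nat and r :: real
    and asd :: "'a \<Rightarrow> complex" and asr ard :: "nat \<Rightarrow> 'a \<Rightarrow> complex"
  assumes "prob_space P"
    and "M \<ge> 1"
    and "0 < r" and "r < 1/2"
    and "prob_space.indep_vars P (\<lambda>_. borel) (link_gain asd asr ard)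
           ({SD} \<union> SR ` {1..M} \<union> RD ` {1..M})"
    and "distributed P lborel asd cn_density"
    and "\<forall>i\<in>{1..M}. distributed P lborel (asr i) cn_density"
    and "\<forall>i\<in>{1..M}. distributed P lborel (ard i) cn_density"
  shows "((\<lambda>\<rho>. ln (outage_prob P M \<rho> r asd asr ard) / ln \<rho>)
           \<longlongrightarrow> - (real (M + 1) * (1 - 2 * r))) at_top"
proof -
  interpret oaf_channel P M asd asr ard
    using assms by (simp add: oaf_channel_def oaf_channel_axioms_def relay_links_def)
  have "\<forall>\<^sub>F \<rho> in at_top. 3 \<le> \<rho> powr (2 * r)"
    using \<open>0 < r\<close> by real_asymp
  then have "\<forall>\<^sub>F \<rho> in at_top.
      1 / (3 * exp 1) ^ (M + 1) * \<rho> powr (real (M + 1) * (2 * r - 1)) \<le> outage_prob P M \<rho> r asd asr ard \<and>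
      outage_prob P M \<rho> r asd asr ard \<le> 2 ^ M * 3 ^ (M + 1) * \<rho> powr (real (M + 1) * (2 * r - 1))"
    using eventually_gt_at_top[of 1]
    by eventually_elim (use outage_prob_lower_bound outage_prob_upper_bound assms(3,4) in auto)
  then have "((\<lambda>\<rho>. ln (outage_prob P M \<rho> r asd asr ard) / ln \<rho>) \<longlongrightarrow> real (M + 1) * (2 * r - 1)) at_top"
    by (rule tendsto_ln_div_ln_of_powr_bounds[rotated 2]) auto
  then show ?thesis by (simp add: algebra_simps)
qed

end
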